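(* Let $\mathbf{L}=\langle L,\leq,0,1\rangle$ be a totally ordered complete lattice, let $f\colon L\to L$ be an order embedding, and let $\mathcal{D}_1,\mathcal{D}_2,\mathcal{D}_3$ be ranked data tables for which both sides of the following equalities are defined. Then (1) $(\mathcal{D}_1\div^{\mathcal{D}_3}\mathcal{D}_2)\circ f=(\mathcal{D}_1\circ f)\div^{\mathcal{D}_3\circ f}(\mathcal{D}_2\circ f)$; (2) $(\mathcal{D}_1\rightarrow^{\mathcal{D}_3}\mathcal{D}_2)\circ f=(\mathcal{D}_1\circ f)\rightarrow^{\mathcal{D}_3\circ f}(\mathcal{D}_2\circ f)$; (3) if $f(0)=0$, then $(\mathcal{D}_1-\mathcal{D}_2)\circ f=(\mathcal{D}_1\circ f)-(\mathcal{D}_2\circ f)$; (4) if $f(1)=1$, then $f(\mathrm{S}(\mathcal{D}_1,\mathcal{D}_2))=\mathrm{S}(\mathcal{D}_1\circ f,\mathcal{D}_2\circ f)$.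
   Context: A relation scheme is a finite set of attributes, each with a (at most countable) set of admissible values; $\mathrm{Tupl}(R)$ is the set of tuples on $R$ (maps assigning to each attribute of $R$ an admissible value). For disjoint $R,S$ and $r\in\mathrm{Tupl}(R)$, $s\in\mathrm{Tupl}(S)$, $rs$ is the tuple on $R\cup S$ extending both. A ranked data table (RDT) on $R$ is a map $\mathcal{D}\colon\mathrm{Tupl}(R)\to L$ with $\{r;\ \mathcal{D}(r)>0\}$ finite. $\mathcal{D}\circ f$ denotes $r\mapsto f(\mathcal{D}(r))$, and operations are applied to such maps by the same formulas. On $L$ define $a\rightarrow b=1$ if $a\leq b$ and $a\rightarrow b=b$ otherwise; $a\ominus b=0$ if $a\leq b$ and $a\ominus b=a$ otherwise. Operations: for $\mathcal{D}_1$ on $R\cup S$ with $R\cap S=\emptyset$, $\mathcal{D}_2$ on $S$ and $\mathcal{D}_3$ on $R$, the division is the map on $\mathrm{Tupl}(R)$ given by $(\mathcal{D}_1\div^{\mathcal{D}_3}\mathcal{D}_2)(r)=\inf\big(\{\mathcal{D}_2(s)\rightarrow\mathcal{D}_1(rs);\ s\in\mathrm{Tupl}(S)\}\cup\{\mathcal{D}_3(r)\}\big)$. For $\mathcal{D}_1,\mathcal{D}_2,\mathcal{D}_3$ on the same $R$: $(\mathcal{D}_1\rightarrow^{\mathcal{D}_3}\mathcal{D}_2)(r)=\inf\{\mathcal{D}_3(r),\mathcal{D}_1(r)\rightarrow\mathcal{D}_2(r)\}$. For $\mathcal{D}_1,\mathcal{D}_2$ on the same $R$: $(\mathcal{D}_1-\mathcal{D}_2)(r)=\mathcal{D}_1(r)\ominus\mathcal{D}_2(r)$,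 and the subsethood score is $\mathrm{S}(\mathcal{D}_1,\mathcal{D}_2)=\inf\{\mathcal{D}_1(r)\rightarrow\mathcal{D}_2(r);\ r\in\mathrm{Tupl}(R)\}\in L$. A map $f$ is an order embedding if $a\leq b \iff f(a)\leq f(b)$. *)

theory Defs
  imports Main "HOL-Library.Countable_Set"
begin

text \<open>Attributes have type 'a, values type 'v. The map dm assigns to each attribute
its set of admissible values.\<close>

definition tuples :: "('a \<Rightarrow> 'v set) \<Rightarrow> 'a set \<Rightarrow> ('a \<rightharpoonup> 'v) set" where
  "tuples dm R = {t. dom t = R \<and> (\<forall>y\<in>R. \<exists>v\<in>dm y. t y = Some v)}"

definition rel_scheme :: "('a \<Rightarrow> 'v set) \<Rightarrow> 'a set \<Rightarrow> bool" where
  "rel_scheme dm R \<longleftrightarrow> finite R \<and> (\<forall>y\<in>R. countable (dm y))"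

text \<open>Ranked data table on R: only its values on tuples of R matter; finitely many
tuples of R get a nonzero rank.\<close>
definition is_rdt :: "('a \<Rightarrow> 'v set) \<Rightarrow> 'a set \<Rightarrow> (('a \<rightharpoonup> 'v) \<Rightarrow> 'l::complete_linorder) \<Rightarrow> bool" where
  "is_rdt dm R D \<longleftrightarrow> finite {r \<in> tuples dm R. D r > bot}"

definition resid :: "'l::complete_linorder \<Rightarrow> 'l \<Rightarrow> 'l" where
  "resid a b = (if a \<le> b then top else b)"

definition bdiff :: "'l::complete_linorder \<Rightarrow> 'l \<Rightarrow> 'l" where
  "bdiff a b = (if a \<le> b then bot else a)"

text \<open>Division of D1 (on R \<union> S) by D2 (on S) bounded by D3 (on R); a map on tuples of R.\<close>
definition rdiv :: "('a \<Rightarrow> 'v set) \<Rightarrow> 'a set \<Rightarrow> (('a \<rightharpoonup> 'v) \<Rightarrow> 'l::complete_linorder)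
   \<Rightarrow> (('a \<rightharpoonup> 'v) \<Rightarrow> 'l) \<Rightarrow> (('a \<rightharpoonup> 'v) \<Rightarrow> 'l) \<Rightarrow> ('a \<rightharpoonup> 'v) \<Rightarrow> 'l" where
  "rdiv dm S D1 D2 D3 r = Inf ({resid (D2 s) (D1 (r ++ s)) | s. s \<in> tuples dm S} \<union> {D3 r})"

definition rimpl :: "(('a \<rightharpoonup> 'v) \<Rightarrow> 'l::complete_linorder) \<Rightarrow> (('a \<rightharpoonup> 'v) \<Rightarrow> 'l)
   \<Rightarrow> (('a \<rightharpoonup> 'v) \<Rightarrow> 'l) \<Rightarrow> ('a \<rightharpoonup> 'v) \<Rightarrow> 'l" where
  "rimpl D1 D2 D3 r = inf (D3 r) (resid (D1 r) (D2 r))"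

definition rminus :: "(('a \<rightharpoonup> 'v) \<Rightarrow> 'l::complete_linorder) \<Rightarrow> (('a \<rightharpoonup> 'v) \<Rightarrow> 'l)
   \<Rightarrow> ('a \<rightharpoonup> 'v) \<Rightarrow> 'l" where
  "rminus D1 D2 r = bdiff (D1 r) (D2 r)"

definition subsethood :: "('a \<Rightarrow> 'v set) \<Rightarrow> 'a set \<Rightarrow> (('a \<rightharpoonup> 'v) \<Rightarrow> 'l::complete_linorder)
   \<Rightarrow> (('a \<rightharpoonup> 'v) \<Rightarrow> 'l) \<Rightarrow> 'l" where
  "subsethood dm R D1 D2 = Inf {resid (D1 r) (D2 r) | r. r \<in> tuples dm R}"

definition order_embedding :: "('l::order \<Rightarrow> 'm::order) \<Rightarrow> bool" where
  "order_embedding f \<longleftrightarrow> (\<forall>a b. a \<le> b \<longleftrightarrow> f a \<le> f b)"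

end

theory Submission
  imports Defs
begin

(* An order embedding preserves every comparison, hence it commutes with the case
   distinctions defining the residuum and the bounded difference, except that it may move
   the value 1 of a residuum; this is harmless wherever the residuum is met with a third
   value, as in division and bounded implication. The only infinitary operation is the
   infimum, and the infima occurring here are attained: a residuum with antecedent 0 is 1,
   so for ranked data tables only finitely many of them differ from 1. A monotone map
   commutes with attained infima. *)

lemma order_embedding_le_iff:
  "order_embedding f \<Longrightarrow> f a \<le> f b \<longleftrightarrow> a \<le> b"
  unfolding order_embedding_def by blast

lemma order_embedding_mono: "order_embedding f \<Longrightarrow> mono f"
  by (simp add: monoI order_embedding_le_iff)

lemma Inf_mem_if_finite_non_top:
  fixes A :: "'l::complete_linorder set"
  assumes "A \<noteq> {}" and "finite (A - {top})"
  shows "Inf A \<in> A"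
proof (cases "A - {top} = {}")
  case True
  then have "A = {top}" using assms(1) by blast
  then show ?thesis by simp
next
  case False
  have "Inf A = Inf (A - {top})"
    by (metis Inf_insert inf_top_left insert_Diff_single insert_absorb2 insert_Diff)
  also have "\<dots> = Min (A - {top})"
    using False assms(2) by (simp add: cInf_eq_Min)
  also have "\<dots> \<in> A - {top}"
    using assms(2) False by (rule Min_in)
  finally show ?thesis by blast
qed

lemma mono_Inf_eq_Inf_image:
  fixes f :: "'l::complete_lattice \<Rightarrow> 'm::complete_lattice"
  assumes "mono f" and "Inf A \<in> A"
  shows "f (Inf A) = Inf (f ` A)"
  using assms by (simp add: INF_lower antisym mono_Inf)

lemma finite_resid_non_top:
  assumes "finite {s \<in> T. D s > bot}"
  shows "finite ((\<lambda>s. resid (D s) (E s)) ` T - {top})"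
proof -
  have "(\<lambda>s. resid (D s) (E s)) ` T - {top} \<subseteq> (\<lambda>s. resid (D s) (E s)) ` {s \<in> T. D s > bot}"
  proof (rule subsetI, elim DiffE imageE)
    fix x s
    assume "x = resid (D s) (E s)" "s \<in> T" "x \<notin> {top}"
    then have "\<not> D s \<le> E s" by (auto simp: resid_def)
    then have "D s > bot" by (meson bot_least le_less_trans not_le)
    with \<open>x = resid (D s) (E s)\<close> \<open>s \<in> T\<close>
    show "x \<in> (\<lambda>s. resid (D s) (E s)) ` {s \<in> T. D s > bot}" by blast
  qed
  with assms show ?thesis
    by (meson finite_imageI finite_subset)
qed

lemma Inf_insert_cong:
  fixes c :: "'l::complete_lattice"
  assumes "\<And>x. x \<in> X \<Longrightarrow> inf c (g x) = inf c (h x)"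
  shows "Inf (insert c (g ` X)) = Inf (insert c (h ` X))"
proof -
  have le: "Inf (insert c (g' ` X)) \<le> Inf (insert c (h' ` X))"
    if "\<And>x. x \<in> X \<Longrightarrow> inf c (g' x) = inf c (h' x)" for g' h'
  proof (rule Inf_greatest)
    fix y assume "y \<in> insert c (h' ` X)"
    then consider "y = c" | x where "x \<in> X" "y = h' x" by blast
    then show "Inf (insert c (g' ` X)) \<le> y"
    proof cases
      case 2
      then have "Inf (insert c (g' ` X)) \<le> inf c (g' x)"
        by (intro le_infI Inf_lower) auto
      also have "\<dots> \<le> y" using that 2 by simp
      finally show ?thesis .
    qed simp
  qed
  show ?thesis
    using le[of g h] le[of h g] assms by (metis antisym)
qed

lemma order_embedding_inf:
  fixes f :: "'l::complete_linorder \<Rightarrow> 'm::complete_linorder"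
  assumes "order_embedding f"
  shows "f (inf a b) = inf (f a) (f b)"
  using min_of_mono[OF order_embedding_mono[OF assms]] by (simp add: inf_min)

lemma order_embedding_inf_resid:
  fixes f :: "'l::complete_linorder \<Rightarrow> 'm::complete_linorder"
  assumes "order_embedding f"
  shows "f (inf c (resid a b)) = inf (f c) (resid (f a) (f b))"
proof -
  have "f c \<le> f top"
    by (simp add: assms order_embedding_le_iff)
  then show ?thesis
    by (simp add: resid_def assms order_embedding_le_iff order_embedding_inf inf_absorb1)
qed

lemma order_embedding_resid:
  assumes "order_embedding f" and "f top = top"
  shows "f (resid a b) = resid (f a) (f b)"
  using assms by (simp add: resid_def order_embedding_le_iff)

lemma order_embedding_bdiff:
  assumes "order_embedding f" and "f bot = bot"
  shows "f (bdiff a b) = bdiff (f a) (f b)"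
  using assms by (simp add: bdiff_def order_embedding_le_iff)

lemma rdiv_eq_Inf_insert:
  "rdiv dm S D1 D2 D3 r = Inf (insert (D3 r) ((\<lambda>s. resid (D2 s) (D1 (r ++ s))) ` tuples dm S))"
  unfolding rdiv_def by (simp add: setcompr_eq_image)

lemma rdiv_order_embedding:
  assumes emb: "order_embedding f" and fin: "finite {s \<in> tuples dm S. D2 s > bot}"
  shows "f (rdiv dm S D1 D2 D3 r) = rdiv dm S (f \<circ> D1) (f \<circ> D2) (f \<circ> D3) r"
proof -
  let ?A = "insert (D3 r) ((\<lambda>s. resid (D2 s) (D1 (r ++ s))) ` tuples dm S)"
  have "Inf ?A \<in> ?A"
    using finite_resid_non_top[OF fin] by (intro Inf_mem_if_finite_non_top) auto
  then have "f (Inf ?A) = Inf (f ` ?A)"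
    by (rule mono_Inf_eq_Inf_image[OF order_embedding_mono[OF emb]])
  also have "\<dots> = Inf (insert (f (D3 r)) ((\<lambda>s. f (resid (D2 s) (D1 (r ++ s)))) ` tuples dm S))"
    by (simp only: image_insert image_image)
  also have "\<dots> = Inf (insert (f (D3 r)) ((\<lambda>s. resid (f (D2 s)) (f (D1 (r ++ s)))) ` tuples dm S))"
    by (rule Inf_insert_cong)
      (metis emb order_embedding_inf order_embedding_inf_resid)
  finally show ?thesis
    by (simp add: rdiv_eq_Inf_insert)
qed

lemma rimpl_order_embedding:
  assumes "order_embedding f"
  shows "f (rimpl D1 D2 D3 r) = rimpl (f \<circ> D1) (f \<circ> D2) (f \<circ> D3) r"
  unfolding rimpl_def comp_apply using assms by (rule order_embedding_inf_resid)

lemma rminus_order_embedding: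
  assumes "order_embedding f" and "f bot = bot"
  shows "f (rminus D1 D2 r) = rminus (f \<circ> D1) (f \<circ> D2) r"
  using assms by (simp add: rminus_def order_embedding_bdiff)

lemma subsethood_order_embedding:
  assumes emb: "order_embedding f" and top: "f top = top"
    and fin: "finite {r \<in> tuples dm R. D1 r > bot}"
  shows "f (subsethood dm R D1 D2) = subsethood dm R (f \<circ> D1) (f \<circ> D2)"
proof -
  let ?A = "(\<lambda>r. resid (D1 r) (D2 r)) ` tuples dm R"
  have "f (Inf ?A) = Inf (f ` ?A)"
  proof (cases "?A = {}")
    case False
    then have "Inf ?A \<in> ?A"
      using finite_resid_non_top[OF fin] by (rule Inf_mem_if_finite_non_top)
    then show ?thesis
      by (rule mono_Inf_eq_Inf_image[OF order_embedding_mono[OF emb]])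
  qed (simp add: top)
  then show ?thesis
    by (simp add: subsethood_def setcompr_eq_image image_image order_embedding_resid[OF emb top])
qed

theorem theorem7:
  fixes dm :: "'a \<Rightarrow> 'v set" and f :: "'l::complete_linorder \<Rightarrow> 'l"
  assumes emb: "order_embedding f"
  shows
   "(\<forall>R S (D1 :: ('a \<rightharpoonup> 'v) \<Rightarrow> 'l) D2 D3.
       rel_scheme dm R \<and> rel_scheme dm S \<and> R \<inter> S = {} \<and>
       is_rdt dm (R \<union> S) D1 \<and> is_rdt dm S D2 \<and> is_rdt dm R D3 \<and>
       is_rdt dm (R \<union> S) (f \<circ> D1) \<and> is_rdt dm S (f \<circ> D2) \<and> is_rdt dm R (f \<circ> D3)
     \<longrightarrow> (\<forall>r\<in>tuples dm R.
           f (rdiv dm S D1 D2 D3 r) = rdiv dm S (f \<circ> D1) (f \<circ> D2) (f \<circ> D3) r))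
  \<and> (\<forall>R (D1 :: ('a \<rightharpoonup> 'v) \<Rightarrow> 'l) D2 D3.
       rel_scheme dm R \<and> is_rdt dm R D1 \<and> is_rdt dm R D2 \<and> is_rdt dm R D3 \<and>
       is_rdt dm R (f \<circ> D1) \<and> is_rdt dm R (f \<circ> D2) \<and> is_rdt dm R (f \<circ> D3)
     \<longrightarrow> (\<forall>r\<in>tuples dm R.
           f (rimpl D1 D2 D3 r) = rimpl (f \<circ> D1) (f \<circ> D2) (f \<circ> D3) r))
  \<and> (f bot = bot \<longrightarrow>
     (\<forall>R (D1 :: ('a \<rightharpoonup> 'v) \<Rightarrow> 'l) D2.
       rel_scheme dm R \<and> is_rdt dm R D1 \<and> is_rdt dm R D2 \<and>
       is_rdt dm R (f \<circ> D1) \<and> is_rdt dm R (f \<circ> D2)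
     \<longrightarrow> (\<forall>r\<in>tuples dm R.
           f (rminus D1 D2 r) = rminus (f \<circ> D1) (f \<circ> D2) r)))
  \<and> (f top = top \<longrightarrow>
     (\<forall>R (D1 :: ('a \<rightharpoonup> 'v) \<Rightarrow> 'l) D2.
       rel_scheme dm R \<and> is_rdt dm R D1 \<and> is_rdt dm R D2 \<and>
       is_rdt dm R (f \<circ> D1) \<and> is_rdt dm R (f \<circ> D2)
     \<longrightarrow> f (subsethood dm R D1 D2) = subsethood dm R (f \<circ> D1) (f \<circ> D2)))"
proof (intro conjI allI impI ballI)
  fix R S and D1 D2 D3 :: "('a \<rightharpoonup> 'v) \<Rightarrow> 'l" and r
  assume "rel_scheme dm R \<and> rel_scheme dm S \<and> R \<inter> S = {} \<and>
       is_rdt dm (R \<union> S) D1 \<and> is_rdt dm S D2 \<and> is_rdt dm R D3 \<and>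
       is_rdt dm (R \<union> S) (f \<circ> D1) \<and> is_rdt dm S (f \<circ> D2) \<and> is_rdt dm R (f \<circ> D3)"
  then have "finite {s \<in> tuples dm S. D2 s > bot}"
    by (simp add: is_rdt_def)
  with emb show "f (rdiv dm S D1 D2 D3 r) = rdiv dm S (f \<circ> D1) (f \<circ> D2) (f \<circ> D3) r"
    by (rule rdiv_order_embedding)
next
  fix D1 D2 D3 :: "('a \<rightharpoonup> 'v) \<Rightarrow> 'l" and r
  from emb show "f (rimpl D1 D2 D3 r) = rimpl (f \<circ> D1) (f \<circ> D2) (f \<circ> D3) r"
    by (rule rimpl_order_embedding)
next
  fix D1 D2 :: "('a \<rightharpoonup> 'v) \<Rightarrow> 'l" and r
  assume "f bot = bot"
  with emb show "f (rminus D1 D2 r) = rminus (f \<circ> D1) (f \<circ> D2) r"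
    by (rule rminus_order_embedding)
next
  fix R and D1 D2 :: "('a \<rightharpoonup> 'v) \<Rightarrow> 'l"
  assume "f top = top" and "rel_scheme dm R \<and> is_rdt dm R D1 \<and> is_rdt dm R D2 \<and>
       is_rdt dm R (f \<circ> D1) \<and> is_rdt dm R (f \<circ> D2)"
  then show "f (subsethood dm R D1 D2) = subsethood dm R (f \<circ> D1) (f \<circ> D2)"
    using emb by (intro subsethood_order_embedding) (simp_all add: is_rdt_def)
qed

end
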